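(* Let $R$ be a ring with identity and involution $*$, and let $a\in R$. The following are equivalent: (1) $a$ is core invertible; (2) $a$ is group invertible and there exists $x\in R$ such that $(ax)^*=ax$ and $xa^2=a$; (3) $a$ is group invertible and there exists $x\in R$ such that $(ax)^*=ax$ and $xa=a^{\#}a$.
   Context: An involution on $R$ satisfies $(a^* )^*=a$, $(ab)^*=b^*a^*$, $(a+b)^*=a^*+b^*$. An element $x\in R$ is a core inverse of $a$ if $axa=a$, $xR=aR$ and $Rx=Ra^*$; $a$ is core invertible if such $x$ exists. The group inverse $a^{\#}$ of $a$ is the (unique) $b$ with $aba=a$, $bab=b$, $ab=ba$; $a$ is group invertible if it exists. *)

theory Defs
  imports Main
begin

definition involution :: "('a::ring_1 \<Rightarrow> 'a) \<Rightarrow> bool" where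
  "involution s \<longleftrightarrow> (\<forall>a. s (s a) = a) \<and> (\<forall>a b. s (a * b) = s b * s a)
      \<and> (\<forall>a b. s (a + b) = s a + s b)"

definition right_ideal :: "'a::ring_1 \<Rightarrow> 'a set" where
  "right_ideal x = {x * r | r. True}"

definition left_ideal :: "'a::ring_1 \<Rightarrow> 'a set" where
  "left_ideal x = {r * x | r. True}"

definition is_core_inverse :: "('a::ring_1 \<Rightarrow> 'a) \<Rightarrow> 'a \<Rightarrow> 'a \<Rightarrow> bool" where
  "is_core_inverse s a x \<longleftrightarrow> a * x * a = a \<and> right_ideal x = right_ideal a
      \<and> left_ideal x = left_ideal (s a)"

definition core_invertible :: "('a::ring_1 \<Rightarrow> 'a) \<Rightarrow> 'a \<Rightarrow> bool" where
  "core_invertible s a \<longleftrightarrow> (\<exists>x. is_core_inverse s a x)"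

definition is_group_inverse :: "'a::ring_1 \<Rightarrow> 'a \<Rightarrow> bool" where
  "is_group_inverse a b \<longleftrightarrow> a * b * a = a \<and> b * a * b = b \<and> a * b = b * a"

definition group_invertible :: "'a::ring_1 \<Rightarrow> bool" where
  "group_invertible a \<longleftrightarrow> (\<exists>b. is_group_inverse a b)"

definition group_inverse :: "'a::ring_1 \<Rightarrow> 'a" where
  "group_inverse a = (THE b. is_group_inverse a b)"

end

theory Submission
  imports Defs
begin

text \<open>If \<open>x\<close> is a core inverse of \<open>a\<close>, the ideal conditions give \<open>x = a t\<close>, \<open>a = x r\<close> and
  \<open>x = p a\<^sup>*\<close>; from these \<open>ax\<close> is a Hermitian idempotent, \<open>xax = x\<close>, \<open>xa\<^sup>2 = a\<close>, and
  \<open>x\<^sup>2a\<close> is the group inverse of \<open>a\<close>. Conversely, if \<open>a\<^sup>#\<close> exists and \<open>x\<close> satisfies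
  \<open>(ax)\<^sup>* = ax\<close> and \<open>xa\<^sup>2 = a\<close>, then \<open>a\<^sup>#ax\<close> is a core inverse: it equals \<open>a(a\<^sup>#x)\<close> and
  \<open>a\<^sup>#(ax)\<^sup>* = a\<^sup>#x\<^sup>*a\<^sup>*\<close>, while \<open>a = (a\<^sup>#ax)a\<^sup>2\<close> and \<open>a\<^sup>* = a\<^sup>*a(a\<^sup>#ax)\<close>. Finally, in presence of
  \<open>a\<^sup>#\<close> the conditions \<open>xa\<^sup>2 = a\<close> and \<open>xa = a\<^sup>#a\<close> are equivalent.\<close>

lemma involution_involutive: "involution s \<Longrightarrow> s (s a) = a"
  unfolding involution_def by blast

lemma involution_mult: "involution s \<Longrightarrow> s (a * b) = s b * s a"
  unfolding involution_def by blast

lemma right_ideal_eq_iff: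
  "right_ideal x = right_ideal y \<longleftrightarrow> (\<exists>r. x = y * r) \<and> (\<exists>r. y = x * r)"
proof
  assume eq: "right_ideal x = right_ideal y"
  have "x \<in> right_ideal x" "y \<in> right_ideal y"
    unfolding right_ideal_def by (metis (mono_tags) mem_Collect_eq mult_1_right)+
  then have "x \<in> right_ideal y" "y \<in> right_ideal x"
    by (simp_all add: eq)
  then show "(\<exists>r. x = y * r) \<and> (\<exists>r. y = x * r)"
    unfolding right_ideal_def by blast
next
  assume "(\<exists>r. x = y * r) \<and> (\<exists>r. y = x * r)"
  then show "right_ideal x = right_ideal y"
    unfolding right_ideal_def by (auto simp: mult.assoc) (metis mult.assoc)+
qed

lemma left_ideal_eq_iff:
  "left_ideal x = left_ideal y \<longleftrightarrow> (\<exists>r. x = r * y) \<and> (\<exists>r. y = r * x)"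
proof
  assume eq: "left_ideal x = left_ideal y"
  have "x \<in> left_ideal x" "y \<in> left_ideal y"
    unfolding left_ideal_def by (metis (mono_tags) mem_Collect_eq mult_1_left)+
  then have "x \<in> left_ideal y" "y \<in> left_ideal x"
    by (simp_all add: eq)
  then show "(\<exists>r. x = r * y) \<and> (\<exists>r. y = r * x)"
    unfolding left_ideal_def by blast
next
  assume "(\<exists>r. x = r * y) \<and> (\<exists>r. y = r * x)"
  then show "left_ideal x = left_ideal y"
    unfolding left_ideal_def by (auto simp: mult.assoc[symmetric]) (metis mult.assoc)+
qed

lemma is_group_inverse_unique:
  assumes b: "is_group_inverse a b" and c: "is_group_inverse a c"
  shows "b = c"
proof -
  have b1: "a * b * a = a" "b * a * b = b" "a * b = b * a"
    and c1: "a * c * a = a" "c * a * c = c" "a * c = c * a"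
    using b c unfolding is_group_inverse_def by auto
  have ab_ac: "a * b = a * c"
    by (metis b1(1,3) c1(1,3) mult.assoc)
  have "b = b * (a * b)" by (metis b1(2) mult.assoc)
  also have "\<dots> = c * (a * c)" by (metis ab_ac b1(3) c1(3) mult.assoc)
  also have "\<dots> = c" by (simp add: c1(2) mult.assoc[symmetric])
  finally show ?thesis .
qed

lemma group_inverse_eqI: "is_group_inverse a b \<Longrightarrow> group_inverse a = b"
  unfolding group_inverse_def using is_group_inverse_unique by blast

lemma is_group_inverse_mult_square_iff:
  assumes "is_group_inverse a g"
  shows "x * a\<^sup>2 = a \<longleftrightarrow> x * a = g * a"
proof -
  have aga: "a * g * a = a" and comm: "a * g = g * a"
    using assms unfolding is_group_inverse_def by auto
  have ag_a: "g * a * a = a" by (simp add: aga comm[symmetric])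
  show ?thesis
  proof
    assume "x * a\<^sup>2 = a"
    then have "x * a * (a * g) = a * g" by (metis power2_eq_square mult.assoc)
    then show "x * a = g * a" by (metis aga comm mult.assoc)
  next
    assume "x * a = g * a"
    then show "x * a\<^sup>2 = a" by (simp add: power2_eq_square mult.assoc[symmetric] ag_a)
  qed
qed

context
  fixes s :: "'a::ring_1 \<Rightarrow> 'a" and a x :: 'a
  assumes inv: "involution s" and core: "is_core_inverse s a x"
begin

lemma is_core_inverse_inner: "a * x * a = a"
  using core unfolding is_core_inverse_def by blast

lemma is_core_inverse_hermitian: "s (a * x) = a * x"
proof -
  obtain p where p: "x = p * s a"
    using core unfolding is_core_inverse_def left_ideal_eq_iff by blast
  have "s a = s a * s (a * x)"
    by (metis is_core_inverse_inner involution_mult[OF inv])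
  then have x_eq: "x = x * s (a * x)"
    by (metis p mult.assoc)
  have "a * x = a * x * s (a * x)"
    by (metis x_eq mult.assoc)
  then show ?thesis
    by (metis involution_mult[OF inv] involution_involutive[OF inv])
qed

lemma is_core_inverse_outer: "x * a * x = x"
proof -
  obtain p where p: "x = p * s a"
    using core unfolding is_core_inverse_def left_ideal_eq_iff by blast
  have "s a = s a * (a * x)"
    by (metis is_core_inverse_inner is_core_inverse_hermitian involution_mult[OF inv])
  then show ?thesis
    by (metis p mult.assoc)
qed

lemma is_core_inverse_mult_square: "x * a\<^sup>2 = a"
proof -
  obtain r where r: "a = x * r"
    using core unfolding is_core_inverse_def right_ideal_eq_iff by blast
  show ?thesis
    by (metis r is_core_inverse_outer power2_eq_square mult.assoc)
qed

lemma is_core_inverse_group_inverse: "is_group_inverse a (x * x * a)"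
proof -
  obtain t where t: "x = a * t"
    using core unfolding is_core_inverse_def right_ideal_eq_iff by blast
  have axx: "a * x * x = x"
    by (metis t is_core_inverse_inner mult.assoc)
  have xa_left: "a * (x * x * a) = x * a"
    by (metis axx mult.assoc)
  have xa_right: "x * x * a * a = x * a"
    by (metis is_core_inverse_mult_square power2_eq_square mult.assoc)
  show ?thesis
    unfolding is_group_inverse_def
    by (metis xa_left xa_right is_core_inverse_inner is_core_inverse_outer mult.assoc)
qed

end

lemma is_core_inverseI:
  assumes inv: "involution s" and g: "is_group_inverse a g"
    and herm: "s (a * x) = a * x" and sq: "x * a\<^sup>2 = a"
  shows "is_core_inverse s a (g * a * x)"
proof -
  have aga: "a * g * a = a" and comm: "a * g = g * a"
    using g unfolding is_group_inverse_def by auto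
  have xa: "x * a = g * a"
    using sq is_group_inverse_mult_square_iff[OF g] by blast
  have axa: "a * x * a = a"
    by (metis xa aga mult.assoc)
  have ay: "a * (g * a * x) = a * x"
    by (metis aga mult.assoc)
  have "g * a * x = a * (g * x)"
    by (metis comm mult.assoc)
  moreover have "a = g * a * x * (a * a)"
    by (metis axa aga comm mult.assoc)
  moreover have "g * a * x = g * s x * s a"
    by (metis herm involution_mult[OF inv] mult.assoc)
  moreover have "s a = s a * a * (g * a * x)"
    by (metis axa ay herm involution_mult[OF inv] mult.assoc)
  ultimately show ?thesis
    unfolding is_core_inverse_def right_ideal_eq_iff left_ideal_eq_iff
    by (metis ay axa mult.assoc)
qed

theorem corollary2p7:
  fixes s :: "'a::ring_1 \<Rightarrow> 'a" and a :: 'a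
  assumes "involution s"
  shows "(core_invertible s a \<longleftrightarrow>
           (group_invertible a \<and> (\<exists>x. s (a * x) = a * x \<and> x * a ^ 2 = a)))
       \<and> (core_invertible s a \<longleftrightarrow>
           (group_invertible a \<and> (\<exists>x. s (a * x) = a * x \<and> x * a = group_inverse a * a)))"
proof -
  have first: "core_invertible s a \<longleftrightarrow>
      (group_invertible a \<and> (\<exists>x. s (a * x) = a * x \<and> x * a ^ 2 = a))"
    unfolding core_invertible_def group_invertible_def
    using is_core_inverse_hermitian[OF assms] is_core_inverse_mult_square[OF assms]
      is_core_inverse_group_inverse[OF assms] is_core_inverseI[OF assms]
    by blast
  have "x * a ^ 2 = a \<longleftrightarrow> x * a = group_inverse a * a" if "group_invertible a" for x
    using that is_group_inverse_mult_square_iff group_inverse_eqI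
    unfolding group_invertible_def by metis
  with first show ?thesis
    by blast
qed

end
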